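(* Let $\Lambda$ be a 2-graph with $\Lambda^{\varepsilon_1}\sqcup\Lambda^{\varepsilon_2}$ finite. Then $(\Lambda^\infty,\sigma)$ is conjugate to the shift of finite type $(\mathsf X^+_{T_\Lambda},\sigma)$, via $x\mapsto(n\mapsto x(n,n+(1,1)))$.
   Context: 2-graph: countable category $\Lambda$ with functor $d:\Lambda\to\mathbb N^2$ with unique factorization; $\Lambda^m=d^{-1}(m)$; $\lambda(m,n)$ the unique factor of degree $n-m$ at position $[m,n]$ for $m\le n\le d(\lambda)$. $\Omega_2$ is the 2-graph with morphisms $\{(m,n)\in\mathbb N^2\times\mathbb N^2: m\le n\}$, composition $(l,m)(m,n)=(l,n)$, degree $d(m,n)=n-m$. $\Lambda^\infty$ is the set of degree-preserving functors $x:\Omega_2\to\Lambda$, with topology generated by $Z(\lambda)=\{y: y(0,d(\lambda))=\lambda\}$ and shifts $\sigma^p(x)(m,n)=x(m+p,n+p)$. $T_\Lambda=(p,q:F_\Lambda\to E_\Lambda)$: $E_\Lambda=(\Lambda^0,\Lambda^{\varepsilon_1},r,s)$; $F_\Lambda$ has vertices $\Lambda^{\varepsilon_2}$, edges $\Lambda^{\varepsilon_1+\varepsilon_2}$, $r(\lambda)=\lambda(0,\varepsilon_2)$, $s(\lambda)=\lambda(\varepsilon_1,\varepsilon_1+\varepsilon_2)$; $p(\lambda)=\lambda(\varepsilon_2,\varepsilon_1+\varepsilon_2)$, $q(\lambda)=\lambda(0,\varepsilon_1)$, and $p=s$, $q=r$ on $\Lambda^{\varepsilon_2}$. $\mathsf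 X^+_T=\{x:\mathbb N^2\to F^1: s(x_n)=r(x_{n+\varepsilon_1}),\ p(x_n)=q(x_{n+\varepsilon_2})\ \forall n\}$ with product topology and $(\sigma^mx)_n=x_{n+m}$. A conjugacy is a homeomorphism commuting with all shifts. *)

theory Defs
  imports "HOL-Analysis.Analysis" "HOL-Library.Product_Plus" "HOL-Library.Product_Order"
begin

text \<open>A (small) category presented in arrows-only form: objects are identified with
their identity morphisms; rng/src give range and source (as identity morphisms);
cmp a b is the composite a b, meaningful when src a = rng b. deg is the degree functor.\<close>

record 'a kgraph =
  Mor :: "'a set"
  rng :: "'a \<Rightarrow> 'a"
  src :: "'a \<Rightarrow> 'a"
  cmp :: "'a \<Rightarrow> 'a \<Rightarrow> 'a"
  deg :: "'a \<Rightarrow> nat \<times> nat"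

definition is_2graph :: "'a kgraph \<Rightarrow> bool" where
  "is_2graph L \<longleftrightarrow>
     countable (Mor L) \<and>
     (\<forall>a\<in>Mor L. rng L a \<in> Mor L \<and> src L a \<in> Mor L) \<and>
     (\<forall>a\<in>Mor L. rng L (rng L a) = rng L a \<and> src L (rng L a) = rng L a
                \<and> rng L (src L a) = src L a \<and> src L (src L a) = src L a) \<and>
     (\<forall>a\<in>Mor L. cmp L (rng L a) a = a \<and> cmp L a (src L a) = a) \<and>
     (\<forall>a\<in>Mor L. \<forall>b\<in>Mor L. src L a = rng L b \<longrightarrow>
         cmp L a b \<in> Mor L \<and> rng L (cmp L a b) = rng L a \<and> src L (cmp L a b) = src L b) \<and>
     (\<forall>a\<in>Mor L. \<forall>b\<in>Mor L. \<forall>c\<in>Mor L. src L a = rng L b \<longrightarrow> src L b = rng L c \<longrightarrow>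
         cmp L (cmp L a b) c = cmp L a (cmp L b c)) \<and>
     (\<forall>a\<in>Mor L. \<forall>b\<in>Mor L. src L a = rng L b \<longrightarrow> deg L (cmp L a b) = deg L a + deg L b) \<and>
     (\<forall>a\<in>Mor L. deg L (rng L a) = 0 \<and> deg L (src L a) = 0) \<and>
     (\<forall>a\<in>Mor L. \<forall>m n. deg L a = m + n \<longrightarrow>
         (\<exists>!(b, c). b \<in> Mor L \<and> c \<in> Mor L \<and> src L b = rng L c \<and>
                    deg L b = m \<and> deg L c = n \<and> a = cmp L b c))"

definition e1 :: "nat \<times> nat" where "e1 = (1, 0)"
definition e2 :: "nat \<times> nat" where "e2 = (0, 1)"

definition Lpow :: "'a kgraph \<Rightarrow> nat \<times> nat \<Rightarrow> 'a set" where
  "Lpow L m = {a \<in> Mor L. deg L a = m}"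

definition factor :: "'a kgraph \<Rightarrow> 'a \<Rightarrow> nat \<times> nat \<Rightarrow> nat \<times> nat \<Rightarrow> 'a" where
  "factor L a m n = (THE v. \<exists>u w. u \<in> Mor L \<and> v \<in> Mor L \<and> w \<in> Mor L \<and>
      src L u = rng L v \<and> src L v = rng L w \<and>
      deg L u = m \<and> deg L v = n - m \<and> deg L w = deg L a - n \<and>
      a = cmp L (cmp L u v) w)"

text \<open>Infinite path space: degree-preserving functors \<Omega>_2 \<rightarrow> \<Lambda>, represented as
functions on pairs (m,n), extensional (undefined) outside m \<le> n.\<close>
definition inf_paths :: "'a kgraph \<Rightarrow> (nat \<times> nat \<Rightarrow> nat \<times> nat \<Rightarrow> 'a) set" where
  "inf_paths L = {x.
     (\<forall>m n. \<not> m \<le> n \<longrightarrow> x m n = undefined) \<and>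
     (\<forall>m n. m \<le> n \<longrightarrow> x m n \<in> Mor L \<and> deg L (x m n) = n - m) \<and>
     (\<forall>m n. m \<le> n \<longrightarrow> rng L (x m n) = x m m \<and> src L (x m n) = x n n) \<and>
     (\<forall>l m n. l \<le> m \<longrightarrow> m \<le> n \<longrightarrow> x l n = cmp L (x l m) (x m n))}"

definition cyl :: "'a kgraph \<Rightarrow> 'a \<Rightarrow> (nat \<times> nat \<Rightarrow> nat \<times> nat \<Rightarrow> 'a) set" where
  "cyl L a = {y \<in> inf_paths L. y 0 (deg L a) = a}"

definition inf_path_topology :: "'a kgraph \<Rightarrow> (nat \<times> nat \<Rightarrow> nat \<times> nat \<Rightarrow> 'a) topology" where
  "inf_path_topology L = topology_generated_by (cyl L ` Mor L)"

definition path_shift :: "nat \<times> nat \<Rightarrow> (nat \<times> nat \<Rightarrow> nat \<times> nat \<Rightarrow> 'a) \<Rightarrow> (nat \<times> nat \<Rightarrow> nat \<times> nat \<Rightarrow> 'a)" where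
  "path_shift p x = (\<lambda>m n. if m \<le> n then x (m + p) (n + p) else undefined)"

definition TF_edges :: "'a kgraph \<Rightarrow> 'a set" where "TF_edges L = Lpow L (e1 + e2)"
definition TF_r :: "'a kgraph \<Rightarrow> 'a \<Rightarrow> 'a" where "TF_r L a = factor L a 0 e2"
definition TF_s :: "'a kgraph \<Rightarrow> 'a \<Rightarrow> 'a" where "TF_s L a = factor L a e1 (e1 + e2)"
definition TF_p :: "'a kgraph \<Rightarrow> 'a \<Rightarrow> 'a" where "TF_p L a = factor L a e2 (e1 + e2)"
definition TF_q :: "'a kgraph \<Rightarrow> 'a \<Rightarrow> 'a" where "TF_q L a = factor L a 0 e1"

definition XT :: "'a kgraph \<Rightarrow> (nat \<times> nat \<Rightarrow> 'a) set" where
  "XT L = {x. (\<forall>n. x n \<in> TF_edges L) \<and>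
              (\<forall>n. TF_s L (x n) = TF_r L (x (n + e1))) \<and>
              (\<forall>n. TF_p L (x n) = TF_q L (x (n + e2)))}"

definition XT_topology :: "'a kgraph \<Rightarrow> (nat \<times> nat \<Rightarrow> 'a) topology" where
  "XT_topology L = subtopology (product_topology (\<lambda>_. discrete_topology (TF_edges L)) UNIV) (XT L)"

definition XT_shift :: "nat \<times> nat \<Rightarrow> (nat \<times> nat \<Rightarrow> 'a) \<Rightarrow> (nat \<times> nat \<Rightarrow> 'a)" where
  "XT_shift m x = (\<lambda>n. x (n + m))"

end

theory Submission
  imports Defs
begin

text \<open>An infinite path \<open>x\<close> is determined by its diagonal morphisms \<open>x 0 (k, k)\<close>, and each
  of them is the previous one followed by the unit square \<open>x (k, k) (k + 1, k + 1)\<close>. Conversely,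
  composing the diagonal squares of a point \<open>y\<close> of the shift space gives morphisms of degree
  \<open>(k, k)\<close>, each a prefix of the next, and their factors form a path. That the off-diagonal unit
  squares of this path are those of \<open>y\<close> follows by induction on the distance to the diagonal,
  because a unit square is determined by two adjacent edges. Both maps are continuous since a
  cylinder only depends on finitely many diagonal squares, while each square of a path is a
  factor of a morphism starting at the origin.\<close>

lemma nat_pair_add_diff_inverse: "(m::nat \<times> nat) \<le> n \<Longrightarrow> m + (n - m) = n"
  by (auto simp: less_eq_prod_def prod_eq_iff)

lemma nat_pair_le_add: "(m::nat \<times> nat) \<le> m + n"
  by (simp add: less_eq_prod_def)

lemma nat_pair_add_diff_cancel_left: "(m::nat \<times> nat) + n - m = n"
  by (simp add: prod_eq_iff)

lemma le_max_fst_snd: "(n::nat \<times> nat) \<le> (max (fst n) (snd n), max (fst n) (snd n))"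
  by (simp add: less_eq_prod_def le_max_iff_disj)

lemma e1_plus_e2: "e1 + e2 = (1, 1)"
  by (simp add: e1_def e2_def)

section \<open>Factorisation in a 2-graph\<close>

locale two_graph =
  fixes L :: "'a kgraph"
  assumes is_2graph: "is_2graph L"
begin

lemma
  assumes "a \<in> Mor L"
  shows rng_in_Mor: "rng L a \<in> Mor L"
    and src_in_Mor: "src L a \<in> Mor L"
    and src_rng: "src L (rng L a) = rng L a"
    and rng_src: "rng L (src L a) = src L a"
    and cmp_rng_left: "cmp L (rng L a) a = a"
    and cmp_src_right: "cmp L a (src L a) = a"
    and deg_rng: "deg L (rng L a) = 0"
    and deg_src: "deg L (src L a) = 0"
  using is_2graph assms unfolding is_2graph_def by simp_all

lemma
  assumes "a \<in> Mor L" "b \<in> Mor L" "src L a = rng L b"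
  shows cmp_in_Mor: "cmp L a b \<in> Mor L"
    and rng_cmp: "rng L (cmp L a b) = rng L a"
    and src_cmp: "src L (cmp L a b) = src L b"
    and deg_cmp: "deg L (cmp L a b) = deg L a + deg L b"
  using is_2graph assms unfolding is_2graph_def by simp_all

lemma cmp_assoc:
  "\<lbrakk>a \<in> Mor L; b \<in> Mor L; c \<in> Mor L; src L a = rng L b; src L b = rng L c\<rbrakk>
    \<Longrightarrow> cmp L (cmp L a b) c = cmp L a (cmp L b c)"
  using is_2graph unfolding is_2graph_def by simp

lemmas cmp_laws = cmp_assoc cmp_in_Mor rng_cmp src_cmp

lemma unique_factorisation:
  assumes "a \<in> Mor L" "deg L a = m + n"
  shows "\<exists>!(b, c). b \<in> Mor L \<and> c \<in> Mor L \<and> src L b = rng L c \<and>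
                    deg L b = m \<and> deg L c = n \<and> a = cmp L b c"
  using is_2graph assms unfolding is_2graph_def by blast

lemma factorisation_exists:
  assumes "a \<in> Mor L" "deg L a = m + n"
  obtains b c where "b \<in> Mor L" "c \<in> Mor L" "src L b = rng L c" "deg L b = m" "deg L c = n"
    "a = cmp L b c"
  using unique_factorisation[OF assms] by blast

lemma factorisation_unique:
  assumes "a \<in> Mor L" "deg L a = m + n"
    and "b \<in> Mor L" "c \<in> Mor L" "src L b = rng L c" "deg L b = m" "deg L c = n" "a = cmp L b c"
    and "b' \<in> Mor L" "c' \<in> Mor L" "src L b' = rng L c'" "deg L b' = m" "deg L c' = n"
      "a = cmp L b' c'"
  shows "b' = b" "c' = c"
proof -
  obtain p where "\<And>q. (case q of (b, c) \<Rightarrow> b \<in> Mor L \<and> c \<in> Mor L \<and> src L b = rng L c \<and>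
                    deg L b = m \<and> deg L c = n \<and> a = cmp L b c) \<Longrightarrow> q = p"
    using unique_factorisation[OF assms(1,2)] by blast
  from this[of "(b, c)"] this[of "(b', c')"] assms(3-) show "b' = b" "c' = c" by auto
qed

definition is_factor :: "'a \<Rightarrow> nat \<times> nat \<Rightarrow> nat \<times> nat \<Rightarrow> 'a \<Rightarrow> bool" where
  "is_factor a m n v \<longleftrightarrow> (\<exists>u w. u \<in> Mor L \<and> v \<in> Mor L \<and> w \<in> Mor L \<and>
      src L u = rng L v \<and> src L v = rng L w \<and>
      deg L u = m \<and> deg L v = n - m \<and> deg L w = deg L a - n \<and> a = cmp L (cmp L u v) w)"

lemma is_factor_unique:
  assumes a: "a \<in> Mor L" "m \<le> n" "n \<le> deg L a"
    and "is_factor a m n v" "is_factor a m n v'"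
  shows "v' = v"
proof -
  obtain u w where uvw: "u \<in> Mor L" "v \<in> Mor L" "w \<in> Mor L" "src L u = rng L v"
      "src L v = rng L w" "deg L u = m" "deg L v = n - m" "deg L w = deg L a - n"
      "a = cmp L (cmp L u v) w"
    using \<open>is_factor a m n v\<close> unfolding is_factor_def by blast
  obtain u' w' where uvw': "u' \<in> Mor L" "v' \<in> Mor L" "w' \<in> Mor L" "src L u' = rng L v'"
      "src L v' = rng L w'" "deg L u' = m" "deg L v' = n - m" "deg L w' = deg L a - n"
      "a = cmp L (cmp L u' v') w'"
    using \<open>is_factor a m n v'\<close> unfolding is_factor_def by blast
  have uv: "cmp L u v \<in> Mor L" "src L (cmp L u v) = rng L w" "deg L (cmp L u v) = n"
    using cmp_in_Mor[OF uvw(1,2,4)] src_cmp[OF uvw(1,2,4)] deg_cmp[OF uvw(1,2,4)] uvw(5-7)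
      nat_pair_add_diff_inverse[OF a(2)] by simp_all
  have uv': "cmp L u' v' \<in> Mor L" "src L (cmp L u' v') = rng L w'" "deg L (cmp L u' v') = n"
    using cmp_in_Mor[OF uvw'(1,2,4)] src_cmp[OF uvw'(1,2,4)] deg_cmp[OF uvw'(1,2,4)] uvw'(5-7)
      nat_pair_add_diff_inverse[OF a(2)] by simp_all
  have "cmp L u v = cmp L u' v'"
    by (rule factorisation_unique(1)[OF a(1) nat_pair_add_diff_inverse[OF a(3), symmetric]
          uv'(1) uvw'(3) uv'(2,3) uvw'(8,9) uv(1) uvw(3) uv(2,3) uvw(8,9)])
  moreover have "deg L (cmp L u v) = m + (n - m)"
    using uv(3) nat_pair_add_diff_inverse[OF a(2)] by simp
  ultimately show "v' = v"
    using factorisation_unique(2)[OF uv(1) _ uvw(1,2,4,6,7) refl uvw'(1,2,4,6,7)] by blast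
qed

lemma is_factor_exists:
  assumes a: "a \<in> Mor L" "m \<le> n" "n \<le> deg L a"
  shows "\<exists>v. is_factor a m n v"
proof -
  obtain b w where bw: "b \<in> Mor L" "w \<in> Mor L" "src L b = rng L w" "deg L b = n"
      "deg L w = deg L a - n" "a = cmp L b w"
    using factorisation_exists[OF a(1) nat_pair_add_diff_inverse[OF a(3), symmetric]] .
  have "deg L b = m + (n - m)"
    using bw(4) nat_pair_add_diff_inverse[OF a(2)] by simp
  then obtain u v where uv: "u \<in> Mor L" "v \<in> Mor L" "src L u = rng L v" "deg L u = m"
      "deg L v = n - m" "b = cmp L u v"
    using factorisation_exists[OF bw(1)] by blast
  have "src L v = rng L w"
    using bw(3) src_cmp[OF uv(1-3)] uv(6) by simp
  then show ?thesis
    unfolding is_factor_def using uv bw by (intro exI[of _ v] exI[of _ u] exI[of _ w]) simp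
qed

lemma is_factor_factor:
  assumes "a \<in> Mor L" "m \<le> n" "n \<le> deg L a"
  shows "is_factor a m n (factor L a m n)"
proof -
  have "\<exists>!v. is_factor a m n v"
    using is_factor_exists[OF assms] is_factor_unique[OF assms] by blast
  then have "is_factor a m n (THE v. is_factor a m n v)"
    by (rule theI')
  then show ?thesis
    unfolding factor_def is_factor_def by simp
qed

lemma factorE:
  assumes "a \<in> Mor L" "m \<le> n" "n \<le> deg L a"
  obtains u w where "u \<in> Mor L" "factor L a m n \<in> Mor L" "w \<in> Mor L"
    "src L u = rng L (factor L a m n)" "src L (factor L a m n) = rng L w"
    "deg L u = m" "deg L (factor L a m n) = n - m" "deg L w = deg L a - n"
    "a = cmp L (cmp L u (factor L a m n)) w"
  using is_factor_factor[OF assms] unfolding is_factor_def by blast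

lemma factor_in_Mor: "\<lbrakk>a \<in> Mor L; m \<le> n; n \<le> deg L a\<rbrakk> \<Longrightarrow> factor L a m n \<in> Mor L"
  by (metis factorE)

lemma deg_factor: "\<lbrakk>a \<in> Mor L; m \<le> n; n \<le> deg L a\<rbrakk> \<Longrightarrow> deg L (factor L a m n) = n - m"
  by (metis factorE)

lemma factor_eqI:
  assumes uvw: "u \<in> Mor L" "v \<in> Mor L" "w \<in> Mor L" "src L u = rng L v" "src L v = rng L w"
    and a: "a = cmp L (cmp L u v) w" and "deg L u = m" "m + deg L v = n"
  shows "factor L a m n = v"
proof -
  have uv: "cmp L u v \<in> Mor L" "src L (cmp L u v) = rng L w" "deg L (cmp L u v) = n"
    using cmp_in_Mor[OF uvw(1,2,4)] src_cmp[OF uvw(1,2,4)] deg_cmp[OF uvw(1,2,4)] uvw(5)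
      assms(7,8) by simp_all
  have deg_a: "a \<in> Mor L" "deg L a = n + deg L w"
    using cmp_in_Mor[OF uv(1) uvw(3) uv(2)] deg_cmp[OF uv(1) uvw(3) uv(2)] uv(3) a by simp_all
  have mn: "m \<le> n" "n \<le> deg L a"
    using assms(8) deg_a(2) nat_pair_le_add by metis+
  have "deg L v = n - m" "deg L w = deg L a - n"
    using assms(8) deg_a(2) nat_pair_add_diff_cancel_left by metis+
  then have "is_factor a m n v"
    unfolding is_factor_def using uvw a assms(7) by blast
  then show ?thesis
    using is_factor_unique[OF deg_a(1) mn] is_factor_factor[OF deg_a(1) mn] by blast
qed

lemma factor_whole: "a \<in> Mor L \<Longrightarrow> factor L a 0 (deg L a) = a"
  by (rule factor_eqI[of "rng L a" a "src L a"])
    (simp_all add: rng_in_Mor src_in_Mor src_rng rng_src cmp_rng_left cmp_src_right deg_rng)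

lemma factor_factor:
  assumes a: "a \<in> Mor L" "m \<le> n" "n \<le> deg L a" and ij: "i \<le> j" "j \<le> n - m"
  shows "factor L (factor L a m n) i j = factor L a (m + i) (m + j)"
proof -
  let ?v = "factor L a m n"
  obtain u w where uvw: "u \<in> Mor L" "?v \<in> Mor L" "w \<in> Mor L" "src L u = rng L ?v"
      "src L ?v = rng L w" "deg L u = m" "deg L ?v = n - m" "a = cmp L (cmp L u ?v) w"
    using factorE[OF a] by metis
  let ?v' = "factor L ?v i j"
  obtain u' w' where uvw': "u' \<in> Mor L" "?v' \<in> Mor L" "w' \<in> Mor L" "src L u' = rng L ?v'"
      "src L ?v' = rng L w'" "deg L u' = i" "deg L ?v' = j - i" "?v = cmp L (cmp L u' ?v') w'"
    using factorE[OF uvw(2) ij(1)] ij(2) uvw(7) by metis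
  have "factor L a (m + i) (m + j) = ?v'"
  proof (rule factor_eqI[OF _ uvw'(2)])
    show "a = cmp L (cmp L (cmp L u u') ?v') (cmp L w' w)"
      using uvw uvw' by (metis cmp_laws)
    show "cmp L u u' \<in> Mor L" "cmp L w' w \<in> Mor L" "src L (cmp L u u') = rng L ?v'"
      "src L ?v' = rng L (cmp L w' w)"
      using uvw uvw' by (metis cmp_laws)+
    show "deg L (cmp L u u') = m + i"
      using uvw uvw' by (metis cmp_laws deg_cmp)
    show "m + i + deg L ?v' = m + j"
      using uvw'(7) ij(1) by (simp add: less_eq_prod_def prod_eq_iff)
  qed
  then show ?thesis ..
qed

lemma factor_split:
  assumes a: "a \<in> Mor L" "l \<le> m" "m \<le> n" "n \<le> deg L a"
  shows "factor L a l n = cmp L (factor L a l m) (factor L a m n)"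
proof -
  let ?v = "factor L a l n"
  obtain u w where uvw: "u \<in> Mor L" "?v \<in> Mor L" "w \<in> Mor L" "src L u = rng L ?v"
      "src L ?v = rng L w" "deg L u = l" "deg L ?v = n - l" "a = cmp L (cmp L u ?v) w"
    using factorE[OF a(1) order_trans[OF a(2,3)] a(4)] by metis
  have "deg L ?v = (m - l) + (n - m)"
    using uvw(7) a(2,3) by (simp add: less_eq_prod_def prod_eq_iff)
  then obtain b c where bc: "b \<in> Mor L" "c \<in> Mor L" "src L b = rng L c" "deg L b = m - l"
      "deg L c = n - m" "?v = cmp L b c"
    using factorisation_exists[OF uvw(2)] by metis
  have "factor L a l m = b"
  proof (rule factor_eqI[OF uvw(1) bc(1)])
    show "a = cmp L (cmp L u b) (cmp L c w)" "cmp L c w \<in> Mor L" "src L u = rng L b"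
      "src L b = rng L (cmp L c w)"
      using uvw bc by (metis cmp_laws)+
    show "deg L u = l" "l + deg L b = m"
      using uvw(6) bc(4) a(2) by (simp_all add: less_eq_prod_def prod_eq_iff)
  qed
  moreover have "factor L a m n = c"
  proof (rule factor_eqI[OF _ bc(2) uvw(3)])
    show "a = cmp L (cmp L (cmp L u b) c) w" "cmp L u b \<in> Mor L" "src L (cmp L u b) = rng L c"
      "src L c = rng L w"
      using uvw bc by (metis cmp_laws)+
    have "deg L (cmp L u b) = l + (m - l)"
      using uvw bc by (metis cmp_laws deg_cmp)
    then show "deg L (cmp L u b) = m"
      using a(2) by (simp add: less_eq_prod_def prod_eq_iff)
    show "m + deg L c = n"
      using bc(5) a(3) by (simp add: less_eq_prod_def prod_eq_iff)
  qed
  ultimately show ?thesis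
    using bc(6) by simp
qed

lemma
  assumes a: "a \<in> Mor L" "m \<le> n" "n \<le> deg L a"
  shows rng_factor: "rng L (factor L a m n) = factor L a m m"
    and src_factor: "src L (factor L a m n) = factor L a n n"
proof -
  let ?v = "factor L a m n"
  obtain u w where uvw: "u \<in> Mor L" "?v \<in> Mor L" "w \<in> Mor L" "src L u = rng L ?v"
      "src L ?v = rng L w" "deg L u = m" "deg L ?v = n - m" "a = cmp L (cmp L u ?v) w"
    using factorE[OF a] by metis
  note ids = rng_in_Mor[OF uvw(2)] src_in_Mor[OF uvw(2)]
  have "factor L a m m = rng L ?v"
  proof (rule factor_eqI[OF uvw(1) ids(1)])
    show "a = cmp L (cmp L u (rng L ?v)) (cmp L ?v w)" "cmp L ?v w \<in> Mor L"
      "src L u = rng L (rng L ?v)" "src L (rng L ?v) = rng L (cmp L ?v w)"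
      using uvw ids cmp_rng_left cmp_src_right src_rng rng_src by (metis cmp_laws)+
    show "deg L u = m" "m + deg L (rng L ?v) = m"
      using uvw(6) deg_rng[OF uvw(2)] by simp_all
  qed
  moreover have "factor L a n n = src L ?v"
  proof (rule factor_eqI[OF _ ids(2) uvw(3)])
    show "a = cmp L (cmp L (cmp L u ?v) (src L ?v)) w" "cmp L u ?v \<in> Mor L"
      "src L (cmp L u ?v) = rng L (src L ?v)" "src L (src L ?v) = rng L w"
      using uvw ids cmp_rng_left cmp_src_right src_rng rng_src by (metis cmp_laws)+
    show "deg L (cmp L u ?v) = n"
      using uvw deg_cmp a(2) nat_pair_add_diff_inverse by metis
    show "n + deg L (src L ?v) = n"
      using deg_src[OF uvw(2)] by simp
  qed
  ultimately show "rng L ?v = factor L a m m" "src L ?v = factor L a n n"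
    by simp_all
qed

lemma factor_zero_zero: "a \<in> Mor L \<Longrightarrow> factor L a 0 0 = rng L a"
  using rng_factor[of a 0 "deg L a"] factor_whole by (simp add: less_eq_prod_def)

lemma factor_deg_deg: "a \<in> Mor L \<Longrightarrow> factor L a (deg L a) (deg L a) = src L a"
  using src_factor[of a 0 "deg L a"] factor_whole by (simp add: less_eq_prod_def)

lemma factor_cmp_left:
  assumes ab: "a \<in> Mor L" "b \<in> Mor L" "src L a = rng L b" and mn: "m \<le> n" "n \<le> deg L a"
  shows "factor L (cmp L a b) m n = factor L a m n"
proof -
  let ?v = "factor L a m n"
  obtain u w where uvw: "u \<in> Mor L" "?v \<in> Mor L" "w \<in> Mor L" "src L u = rng L ?v"
      "src L ?v = rng L w" "deg L u = m" "deg L ?v = n - m" "a = cmp L (cmp L u ?v) w"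
    using factorE[OF ab(1) mn] by metis
  show ?thesis
  proof (rule factor_eqI[OF uvw(1,2) _ uvw(4) _ _ uvw(6)])
    show "cmp L a b = cmp L (cmp L u ?v) (cmp L w b)" "cmp L w b \<in> Mor L"
      "src L ?v = rng L (cmp L w b)"
      using uvw ab by (metis cmp_laws)+
    show "m + deg L ?v = n"
      using uvw(7) mn(1) nat_pair_add_diff_inverse by metis
  qed
qed

end

section \<open>The conjugacy and its inverse\<close>

definition path_to_XT :: "(nat \<times> nat \<Rightarrow> nat \<times> nat \<Rightarrow> 'a) \<Rightarrow> nat \<times> nat \<Rightarrow> 'a" where
  "path_to_XT x = (\<lambda>n. x n (n + (1, 1)))"

lemma path_to_XT_path_shift: "path_to_XT (path_shift p x) = XT_shift p (path_to_XT x)"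
  by (simp add: path_to_XT_def path_shift_def XT_shift_def less_eq_prod_def ac_simps)

fun diagonal :: "'a kgraph \<Rightarrow> (nat \<times> nat \<Rightarrow> 'a) \<Rightarrow> nat \<Rightarrow> 'a" where
  "diagonal L y 0 = rng L (y (0, 0))"
| "diagonal L y (Suc k) = cmp L (diagonal L y k) (y (k, k))"

text \<open>Every diagonal morphism of degree at least \<open>n\<close> has the same factors below \<open>n\<close>
  (\<open>factor_diagonal_mono\<close>); \<open>max (fst n) (snd n)\<close> is merely the least choice.\<close>

definition XT_to_path :: "'a kgraph \<Rightarrow> (nat \<times> nat \<Rightarrow> 'a) \<Rightarrow> nat \<times> nat \<Rightarrow> nat \<times> nat \<Rightarrow> 'a" where
  "XT_to_path L y = (\<lambda>m n. if m \<le> n then factor L (diagonal L y (max (fst n) (snd n))) m n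
                            else undefined)"

lemma diagonal_cong: "(\<And>j. j \<le> k \<Longrightarrow> z (j, j) = y (j, j)) \<Longrightarrow> diagonal L z k = diagonal L y k"
  by (induction k) auto

context two_graph
begin

section \<open>Infinite paths and the shift space\<close>

lemma
  assumes "x \<in> inf_paths L"
  shows inf_paths_undefined: "\<not> m \<le> n \<Longrightarrow> x m n = undefined"
    and inf_paths_in_Mor: "m \<le> n \<Longrightarrow> x m n \<in> Mor L"
    and inf_paths_deg: "m \<le> n \<Longrightarrow> deg L (x m n) = n - m"
    and inf_paths_rng: "m \<le> n \<Longrightarrow> rng L (x m n) = x m m"
    and inf_paths_src: "m \<le> n \<Longrightarrow> src L (x m n) = x n n"
    and inf_paths_cmp: "l \<le> m \<Longrightarrow> m \<le> n \<Longrightarrow> x l n = cmp L (x l m) (x m n)"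
  using assms unfolding inf_paths_def by blast+

lemma factor_inf_path:
  assumes x: "x \<in> inf_paths L" and "i \<le> j" "m + j \<le> n"
  shows "factor L (x m n) i j = x (m + i) (m + j)"
proof (rule factor_eqI)
  have le: "m \<le> m + i" "m + i \<le> m + j" "m + j \<le> n" "m \<le> m + j"
    using assms(2,3) by (auto simp: less_eq_prod_def)
  show "x m n = cmp L (cmp L (x m (m + i)) (x (m + i) (m + j))) (x (m + j) n)"
    using inf_paths_cmp[OF x le(1,2)] inf_paths_cmp[OF x le(4,3)] by simp
  show "x m (m + i) \<in> Mor L" "x (m + i) (m + j) \<in> Mor L" "x (m + j) n \<in> Mor L"
    using inf_paths_in_Mor[OF x] le by auto
  show "src L (x m (m + i)) = rng L (x (m + i) (m + j))"
    "src L (x (m + i) (m + j)) = rng L (x (m + j) n)"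
    using inf_paths_rng[OF x] inf_paths_src[OF x] le by auto
  show "deg L (x m (m + i)) = i" "i + deg L (x (m + i) (m + j)) = j"
    using inf_paths_deg[OF x le(1)] inf_paths_deg[OF x le(2)] assms(2)
    by (simp_all add: prod_eq_iff less_eq_prod_def)
qed

lemma cyl_factor:
  assumes "x \<in> cyl L a" "m \<le> n" "n \<le> deg L a"
  shows "x m n = factor L a m n"
  using assms factor_inf_path[of x m n 0 "deg L a"] unfolding cyl_def by simp

lemma inf_path_in_cyl: "x \<in> inf_paths L \<Longrightarrow> x \<in> cyl L (x 0 n)"
  unfolding cyl_def by (simp add: inf_paths_deg less_eq_prod_def)

lemma path_to_XT_in_XT:
  assumes x: "x \<in> inf_paths L"
  shows "path_to_XT x \<in> XT L"
proof -
  have le: "n \<le> n + (1, 1)" "n + (e1 + e2) \<le> n + (1, 1)" "n + e1 \<le> n + (1, 1)"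
    "n + e2 \<le> n + (1, 1)" "0 \<le> e1" "0 \<le> e2" "e1 \<le> e1 + e2" "e2 \<le> e1 + e2"
    for n :: "nat \<times> nat"
    by (auto simp: e1_def e2_def less_eq_prod_def)
  have "x n (n + (1, 1)) \<in> TF_edges L" for n
    using inf_paths_in_Mor[OF x le(1)] inf_paths_deg[OF x le(1)]
    unfolding TF_edges_def Lpow_def by (simp add: e1_plus_e2)
  moreover have "TF_s L (x n (n + (1, 1))) = TF_r L (x (n + e1) (n + e1 + (1, 1)))" for n
    using factor_inf_path[OF x le(7,2)] factor_inf_path[OF x le(6) le(4)[of "n + e1"]]
    unfolding TF_s_def TF_r_def by (simp add: e1_plus_e2 add.assoc)
  moreover have "TF_p L (x n (n + (1, 1))) = TF_q L (x (n + e2) (n + e2 + (1, 1)))" for n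
    using factor_inf_path[OF x le(8,2)] factor_inf_path[OF x le(5) le(3)[of "n + e2"]]
    unfolding TF_p_def TF_q_def by (simp add: e1_def e2_def add.assoc)
  ultimately show ?thesis
    unfolding XT_def path_to_XT_def mem_Collect_eq by blast
qed

lemma
  assumes "y \<in> XT L"
  shows XT_in_Mor: "y n \<in> Mor L"
    and XT_deg: "deg L (y n) = (1, 1)"
  using assms unfolding XT_def TF_edges_def Lpow_def e1_plus_e2 by blast+

lemma
  assumes "y \<in> XT L"
  shows XT_TF_s: "TF_s L (y (i, j)) = TF_r L (y (Suc i, j))"
    and XT_TF_p: "TF_p L (y (i, j)) = TF_q L (y (i, Suc j))"
  using assms unfolding XT_def e1_def e2_def by auto

lemma XT_src_eq_rng_Suc_Suc:
  assumes y: "y \<in> XT L"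
  shows "src L (y (i, j)) = rng L (y (Suc i, Suc j))"
proof -
  note sq = XT_in_Mor[OF y] XT_deg[OF y]
  have le: "0 \<le> e1" "e1 \<le> (1, 1)" "0 \<le> e2" "e2 \<le> (1, 1)"
    by (auto simp: e1_def e2_def less_eq_prod_def)
  have "src L (y (i, j)) = src L (TF_s L (y (i, j)))"
    unfolding TF_s_def e1_plus_e2 using src_factor[OF sq(1) le(2)] factor_deg_deg[OF sq(1)] sq(2)
    by simp
  also have "\<dots> = src L (TF_r L (y (Suc i, j)))"
    using XT_TF_s[OF y] by simp
  also have "\<dots> = rng L (TF_p L (y (Suc i, j)))"
    unfolding TF_r_def TF_p_def e1_plus_e2
    using src_factor[OF sq(1) le(3)] rng_factor[OF sq(1) le(4)] sq(2) le(4) by simp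
  also have "\<dots> = rng L (TF_q L (y (Suc i, Suc j)))"
    using XT_TF_p[OF y] by simp
  also have "\<dots> = rng L (y (Suc i, Suc j))"
    unfolding TF_q_def using rng_factor[OF sq(1) le(1)] factor_zero_zero[OF sq(1)] sq(2) le(2)
    by simp
  finally show ?thesis .
qed

section \<open>Recovering a path from its unit squares\<close>

lemma diagonal_in_Mor_deg_src:
  assumes y: "y \<in> XT L"
  shows "diagonal L y k \<in> Mor L \<and> deg L (diagonal L y k) = (k, k)
    \<and> src L (diagonal L y k) = rng L (y (k, k))"
proof (induction k)
  case 0
  show ?case
    using XT_in_Mor[OF y] rng_in_Mor src_rng deg_rng by (simp add: zero_prod_def)
next
  case (Suc k)
  then show ?case
    using XT_in_Mor[OF y] XT_deg[OF y] XT_src_eq_rng_Suc_Suc[OF y] cmp_in_Mor deg_cmp src_cmp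
    by simp
qed

lemmas diagonal_in_Mor = diagonal_in_Mor_deg_src[THEN conjunct1]
  and deg_diagonal = diagonal_in_Mor_deg_src[THEN conjunct2, THEN conjunct1]
  and src_diagonal = diagonal_in_Mor_deg_src[THEN conjunct2, THEN conjunct2]

lemma factor_diagonal_mono:
  assumes y: "y \<in> XT L" and "K \<le> K'" "m \<le> n" "n \<le> (K, K)"
  shows "factor L (diagonal L y K') m n = factor L (diagonal L y K) m n"
  using \<open>K \<le> K'\<close>
proof (induction K' rule: dec_induct)
  case (step k)
  have "n \<le> deg L (diagonal L y k)"
    using deg_diagonal[OF y] assms(4) step(1) by (auto simp: less_eq_prod_def)
  then have "factor L (diagonal L y (Suc k)) m n = factor L (diagonal L y k) m n"
    using factor_cmp_left[OF diagonal_in_Mor[OF y] XT_in_Mor[OF y] src_diagonal[OF y] assms(3)]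
    by simp
  then show ?case
    using step(3) by simp
qed simp

lemma XT_to_path_eq:
  assumes y: "y \<in> XT L" and mn: "m \<le> n" "n \<le> (K, K)"
  shows "XT_to_path L y m n = factor L (diagonal L y K) m n"
proof -
  let ?N = "max (fst n) (snd n)"
  have "XT_to_path L y m n = factor L (diagonal L y ?N) m n"
    unfolding XT_to_path_def using mn(1) by simp
  also have "\<dots> = factor L (diagonal L y (max K ?N)) m n"
    using factor_diagonal_mono[OF y max.cobounded2 mn(1) le_max_fst_snd] by simp
  also have "\<dots> = factor L (diagonal L y K) m n"
    using factor_diagonal_mono[OF y max.cobounded1 mn] .
  finally show ?thesis .
qed

lemma XT_to_path_in_inf_paths:
  assumes y: "y \<in> XT L"
  shows "XT_to_path L y \<in> inf_paths L"
  unfolding inf_paths_def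
proof (intro CollectI conjI allI impI)
  fix l m n :: "nat \<times> nat"
  let ?N = "max (fst n) (snd n)"
  note D = diagonal_in_Mor[OF y, of ?N] deg_diagonal[OF y, of ?N]
  note n = le_max_fst_snd[of n]
  show "\<not> m \<le> n \<Longrightarrow> XT_to_path L y m n = undefined"
    unfolding XT_to_path_def by simp
  assume mn: "m \<le> n"
  note eq = XT_to_path_eq[OF y _ order_trans[OF _ n]]
  show "XT_to_path L y m n \<in> Mor L" "deg L (XT_to_path L y m n) = n - m"
    using eq[OF mn order_refl] factor_in_Mor[OF D(1) mn] deg_factor[OF D(1) mn] D(2) n by simp_all
  show "rng L (XT_to_path L y m n) = XT_to_path L y m m"
    "src L (XT_to_path L y m n) = XT_to_path L y n n"
    using eq[OF mn order_refl] eq[OF order_refl mn] eq[OF order_refl order_refl]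
      rng_factor[OF D(1) mn] src_factor[OF D(1) mn] D(2) n by simp_all
  show "XT_to_path L y l n = cmp L (XT_to_path L y l m) (XT_to_path L y m n)" if "l \<le> m"
    using eq[OF order_trans[OF that mn] order_refl] eq[OF that mn] eq[OF mn order_refl]
      factor_split[OF D(1) that mn] D(2) n by simp
qed

lemma TF_factor_unit_square:
  assumes a: "a \<in> Mor L" "deg L a = (K, K)" and "Suc i \<le> K" "Suc j \<le> K"
  shows "TF_r L (factor L a (i, j) (Suc i, Suc j)) = factor L a (i, j) (i, Suc j)"
    and "TF_p L (factor L a (i, j) (Suc i, Suc j)) = factor L a (i, Suc j) (Suc i, Suc j)"
    and "TF_q L (factor L a (i, j) (Suc i, Suc j)) = factor L a (i, j) (Suc i, j)"
    and "TF_s L (factor L a (i, j) (Suc i, Suc j)) = factor L a (Suc i, j) (Suc i, Suc j)"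
proof -
  have sq: "(i, j) \<le> (Suc i, Suc j)" "(Suc i, Suc j) \<le> deg L a"
    using assms by auto
  show "TF_r L (factor L a (i, j) (Suc i, Suc j)) = factor L a (i, j) (i, Suc j)"
    "TF_p L (factor L a (i, j) (Suc i, Suc j)) = factor L a (i, Suc j) (Suc i, Suc j)"
    "TF_q L (factor L a (i, j) (Suc i, Suc j)) = factor L a (i, j) (Suc i, j)"
    "TF_s L (factor L a (i, j) (Suc i, Suc j)) = factor L a (Suc i, j) (Suc i, Suc j)"
    unfolding TF_r_def TF_p_def TF_q_def TF_s_def
    using factor_factor[OF a(1) sq] by (simp_all add: e1_def e2_def less_eq_prod_def)
qed

lemma
  assumes "b \<in> Mor L" "deg L b = (1, 1)"
  shows unit_square_eq_cmp_r_p: "b = cmp L (TF_r L b) (TF_p L b)"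
    and unit_square_eq_cmp_q_s: "b = cmp L (TF_q L b) (TF_s L b)"
proof -
  have le: "0 \<le> e1" "e1 \<le> (1, 1)" "0 \<le> e2" "e2 \<le> (1, 1)"
    by (auto simp: e1_def e2_def less_eq_prod_def)
  show "b = cmp L (TF_r L b) (TF_p L b)" "b = cmp L (TF_q L b) (TF_s L b)"
    unfolding TF_r_def TF_p_def TF_q_def TF_s_def e1_plus_e2
    using factor_split[OF assms(1) le(3,4)] factor_split[OF assms(1) le(1,2)]
      factor_whole[OF assms(1)] assms(2) by simp_all
qed

lemma factor_diagonal_on_diagonal:
  assumes y: "y \<in> XT L" and "Suc k \<le> K"
  shows "factor L (diagonal L y K) (k, k) (Suc k, Suc k) = y (k, k)"
proof -
  note D = diagonal_in_Mor[OF y, of k] XT_in_Mor[OF y, of "(k, k)"] src_diagonal[OF y, of k]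
  have "factor L (diagonal L y K) (k, k) (Suc k, Suc k)
      = factor L (diagonal L y (Suc k)) (k, k) (Suc k, Suc k)"
    by (rule factor_diagonal_mono[OF y \<open>Suc k \<le> K\<close>]) auto
  also have "\<dots> = y (k, k)"
  proof (rule factor_eqI[OF D(1,2) src_in_Mor[OF D(2)] D(3) rng_src[OF D(2), symmetric]])
    show "diagonal L y (Suc k) = cmp L (cmp L (diagonal L y k) (y (k, k))) (src L (y (k, k)))"
      using cmp_src_right[OF cmp_in_Mor[OF D]] src_cmp[OF D] by simp
    show "deg L (diagonal L y k) = (k, k)" "(k, k) + deg L (y (k, k)) = (Suc k, Suc k)"
      using deg_diagonal[OF y] XT_deg[OF y] by simp_all
  qed
  finally show ?thesis .
qed

text \<open>Induction on the distance \<open>|i - j|\<close> from the diagonal: a unit square is determined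
  by its edges \<open>r, p\<close> (or \<open>q, s\<close>), and the textile relations of \<open>y\<close> identify these edges
  with edges of squares that are closer to the diagonal.\<close>

lemma factor_diagonal_unit_square:
  assumes y: "y \<in> XT L" and "Suc i \<le> K" "Suc j \<le> K"
  shows "factor L (diagonal L y K) (i, j) (Suc i, Suc j) = y (i, j)"
proof -
  let ?a = "diagonal L y K"
  let ?S = "\<lambda>i j. factor L ?a (i, j) (Suc i, Suc j)"
  note a = diagonal_in_Mor[OF y, of K] deg_diagonal[OF y, of K]
  have S: "?S i j \<in> Mor L" "deg L (?S i j) = (1, 1)" if "Suc i \<le> K" "Suc j \<le> K" for i j
    using factor_in_Mor[OF a(1), of "(i, j)" "(Suc i, Suc j)"]
      deg_factor[OF a(1), of "(i, j)" "(Suc i, Suc j)"] a(2) that by auto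
  have "?S i j = y (i, j)" if "Suc i \<le> K" "Suc j \<le> K" "(i - j) + (j - i) = d" for d i j
    using that
  proof (induction d arbitrary: i j)
    case 0
    then show ?case
      using factor_diagonal_on_diagonal[OF y] by auto
  next
    case (Suc d)
    note edges = TF_factor_unit_square[OF a]
    show ?case
    proof (cases "j < i")
      case True
      then obtain i' where i': "i = Suc i'"
        by (cases i) auto
      have "TF_r L (?S i j) = TF_r L (y (i, j))"
        using edges(1)[OF Suc.prems(1,2)] edges(4)[of i' j] Suc.IH[of i' j] XT_TF_s[OF y, of i' j]
          Suc.prems True i' by auto
      moreover have "TF_p L (?S i j) = TF_p L (y (i, j))"
        using edges(2)[OF Suc.prems(1,2)] edges(3)[of i "Suc j"] Suc.IH[of i "Suc j"]
          XT_TF_p[OF y, of i j] Suc.prems True by auto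
      ultimately show ?thesis
        using unit_square_eq_cmp_r_p S[OF Suc.prems(1,2)] XT_in_Mor[OF y] XT_deg[OF y] by metis
    next
      case False
      then have "i < j"
        using Suc.prems(3) by auto
      then obtain j' where j': "j = Suc j'"
        by (cases j) auto
      have "TF_q L (?S i j) = TF_q L (y (i, j))"
        using edges(3)[OF Suc.prems(1,2)] edges(2)[of i j'] Suc.IH[of i j'] XT_TF_p[OF y, of i j']
          Suc.prems \<open>i < j\<close> j' by auto
      moreover have "TF_s L (?S i j) = TF_s L (y (i, j))"
        using edges(4)[OF Suc.prems(1,2)] edges(1)[of "Suc i" j] Suc.IH[of "Suc i" j]
          XT_TF_s[OF y, of i j] Suc.prems \<open>i < j\<close> by auto
      ultimately show ?thesis
        using unit_square_eq_cmp_q_s S[OF Suc.prems(1,2)] XT_in_Mor[OF y] XT_deg[OF y] by metis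
    qed
  qed
  then show ?thesis
    using assms(2,3) by blast
qed

lemma path_to_XT_XT_to_path:
  assumes y: "y \<in> XT L"
  shows "path_to_XT (XT_to_path L y) = y"
proof
  fix n :: "nat \<times> nat"
  obtain i j where n: "n = (i, j)"
    by (cases n)
  have "XT_to_path L y n (n + (1, 1))
      = factor L (diagonal L y (Suc (i + j))) (i, j) (Suc i, Suc j)"
    using XT_to_path_eq[OF y, of "(i, j)" "(Suc i, Suc j)" "Suc (i + j)"] n by simp
  also have "\<dots> = y n"
    using factor_diagonal_unit_square[OF y, of i "Suc (i + j)" j] n by simp
  finally show "path_to_XT (XT_to_path L y) n = y n"
    unfolding path_to_XT_def .
qed

lemma diagonal_path_to_XT:
  assumes x: "x \<in> inf_paths L"
  shows "diagonal L (path_to_XT x) k = x 0 (k, k)"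
proof (induction k)
  case 0
  show ?case
    using inf_paths_rng[OF x, of 0 "(1, 1)"] by (simp add: path_to_XT_def zero_prod_def)
next
  case (Suc k)
  have "x 0 (Suc k, Suc k) = cmp L (x 0 (k, k)) (x (k, k) (Suc k, Suc k))"
    by (rule inf_paths_cmp[OF x]) (auto simp: zero_prod_def)
  then show ?case
    using Suc by (simp add: path_to_XT_def)
qed

lemma XT_to_path_path_to_XT:
  assumes x: "x \<in> inf_paths L"
  shows "XT_to_path L (path_to_XT x) = x"
proof (intro ext)
  fix m n :: "nat \<times> nat"
  let ?N = "max (fst n) (snd n)"
  show "XT_to_path L (path_to_XT x) m n = x m n"
  proof (cases "m \<le> n")
    case True
    have "XT_to_path L (path_to_XT x) m n = factor L (x 0 (?N, ?N)) m n"
      using XT_to_path_eq[OF path_to_XT_in_XT[OF x] True le_max_fst_snd]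
        diagonal_path_to_XT[OF x] by simp
    also have "\<dots> = x m n"
      using factor_inf_path[OF x True, of 0] le_max_fst_snd[of n] by simp
    finally show ?thesis .
  next
    case False
    then show ?thesis
      unfolding XT_to_path_def using inf_paths_undefined[OF x False] by simp
  qed
qed

section \<open>Continuity\<close>

lemma topspace_inf_path_topology: "topspace (inf_path_topology L) = inf_paths L"
  using inf_path_in_cyl inf_paths_in_Mor[of _ 0 0]
  unfolding inf_path_topology_def topology_generated_by_topspace cyl_def by blast

lemma topspace_XT_topology: "topspace (XT_topology L) = XT L"
  unfolding XT_topology_def by (auto simp: XT_def PiE_iff)

lemma continuous_map_path_to_XT:
  "continuous_map (inf_path_topology L) (XT_topology L) path_to_XT"
  unfolding XT_topology_def
proof (rule continuous_map_into_subtopology)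
  show "path_to_XT \<in> topspace (inf_path_topology L) \<rightarrow> XT L"
    using path_to_XT_in_XT topspace_inf_path_topology by auto
  show "continuous_map (inf_path_topology L)
      (product_topology (\<lambda>_. discrete_topology (TF_edges L)) UNIV) path_to_XT"
    unfolding continuous_map_componentwise_UNIV
  proof
    fix k :: "nat \<times> nat"
    have k: "k \<le> k + (1, 1)" "0 + (k + (1, 1)) \<le> k + (1, 1)"
      by (auto simp: less_eq_prod_def)
    have edge: "path_to_XT x k \<in> TF_edges L" if "x \<in> inf_paths L" for x
      using path_to_XT_in_XT[OF that] unfolding XT_def by blast
    have preimage: "{x \<in> topspace (inf_path_topology L). path_to_XT x k \<in> U}
        = \<Union> (cyl L ` {a \<in> Mor L. deg L a = k + (1, 1) \<and> factor L a k (k + (1, 1)) \<in> U})"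
      (is "?A = \<Union> (cyl L ` ?C)") for U
    proof
      show "?A \<subseteq> \<Union> (cyl L ` ?C)"
      proof
        fix x assume "x \<in> ?A"
        then have x: "x \<in> inf_paths L" "x k (k + (1, 1)) \<in> U"
          by (simp_all add: topspace_inf_path_topology path_to_XT_def)
        then have "x 0 (k + (1, 1)) \<in> ?C"
          using inf_paths_in_Mor[OF x(1)] inf_paths_deg[OF x(1)] factor_inf_path[OF x(1) k]
          by (simp add: less_eq_prod_def)
        then show "x \<in> \<Union> (cyl L ` ?C)"
          using inf_path_in_cyl[OF x(1)] by blast
      qed
      show "\<Union> (cyl L ` ?C) \<subseteq> ?A"
        using cyl_factor[OF _ k(1)]
        unfolding topspace_inf_path_topology path_to_XT_def cyl_def by auto
    qed
    show "continuous_map (inf_path_topology L) (discrete_topology (TF_edges L))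
        (\<lambda>x. path_to_XT x k)"
      unfolding continuous_map_def
    proof (intro conjI allI impI)
      show "(\<lambda>x. path_to_XT x k) \<in> topspace (inf_path_topology L) \<rightarrow> topspace (discrete_topology (TF_edges L))"
        using edge topspace_inf_path_topology by auto
      show "openin (inf_path_topology L) {x \<in> topspace (inf_path_topology L). path_to_XT x k \<in> U}"
        for U
        unfolding preimage unfolding inf_path_topology_def
        by (intro openin_Union) (auto intro: topology_generated_by_Basis)
    qed
  qed
qed

lemma openin_XT_topology_diagonal_agree:
  assumes "y \<in> XT L"
  shows "openin (XT_topology L) {z \<in> XT L. \<forall>k\<le>K. z (k, k) = y (k, k)}"
proof -
  let ?P = "product_topology (\<lambda>_. discrete_topology (TF_edges L)) (UNIV :: (nat \<times> nat) set)"
  have "openin ?P (\<Inter>k\<in>{..K}. {z \<in> topspace ?P. z (k, k) \<in> {y (k, k)}})"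
    by (intro openin_INT2 openin_continuous_map_preimage[OF continuous_map_product_projection])
      (use assms in \<open>auto simp: XT_def\<close>)
  then have "openin (XT_topology L) (XT L \<inter> (\<Inter>k\<in>{..K}. {z \<in> topspace ?P. z (k, k) \<in> {y (k, k)}}))"
    unfolding XT_topology_def by (rule openin_subtopology_Int2)
  moreover have "XT L \<inter> (\<Inter>k\<in>{..K}. {z \<in> topspace ?P. z (k, k) \<in> {y (k, k)}})
      = {z \<in> XT L. \<forall>k\<le>K. z (k, k) = y (k, k)}"
    by (auto simp: XT_def PiE_iff)
  ultimately show ?thesis
    by simp
qed

lemma continuous_map_XT_to_path:
  "continuous_map (XT_topology L) (inf_path_topology L) (XT_to_path L)"
  unfolding inf_path_topology_def continuous_on_generated_topo_iff
proof (intro conjI allI impI)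
  show "XT_to_path L ` topspace (XT_topology L) \<subseteq> \<Union> (cyl L ` Mor L)"
    using XT_to_path_in_inf_paths topspace_inf_path_topology
    unfolding inf_path_topology_def topspace_XT_topology by auto
  fix U
  assume "U \<in> cyl L ` Mor L"
  then obtain a where a: "a \<in> Mor L" "U = cyl L a"
    by auto
  define K where "K = max (fst (deg L a)) (snd (deg L a))"
  have deg_a: "0 \<le> deg L a" "deg L a \<le> (K, K)"
    using le_max_fst_snd unfolding K_def by (auto simp: less_eq_prod_def)
  show "openin (XT_topology L) (XT_to_path L -` U \<inter> topspace (XT_topology L))"
  proof (subst openin_subopen, intro ballI)
    fix y
    assume "y \<in> XT_to_path L -` U \<inter> topspace (XT_topology L)"
    then have y: "y \<in> XT L" "XT_to_path L y 0 (deg L a) = a"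
      using a unfolding topspace_XT_topology cyl_def by auto
    have "{z \<in> XT L. \<forall>k\<le>K. z (k, k) = y (k, k)} \<subseteq> XT_to_path L -` U \<inter> topspace (XT_topology L)"
    proof
      fix z
      assume "z \<in> {z \<in> XT L. \<forall>k\<le>K. z (k, k) = y (k, k)}"
      then have z: "z \<in> XT L" "\<And>k. k \<le> K \<Longrightarrow> z (k, k) = y (k, k)"
        by auto
      have "XT_to_path L z 0 (deg L a) = factor L (diagonal L z K) 0 (deg L a)"
        using XT_to_path_eq[OF z(1) deg_a] .
      also have "\<dots> = factor L (diagonal L y K) 0 (deg L a)"
        using diagonal_cong[of K z y] z(2) by simp
      also have "\<dots> = a"
        using XT_to_path_eq[OF y(1) deg_a] y(2) by simp
      finally show "z \<in> XT_to_path L -` U \<inter> topspace (XT_topology L)"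
        using XT_to_path_in_inf_paths[OF z(1)] z(1) a(2)
        unfolding topspace_XT_topology cyl_def by simp
    qed
    then show "\<exists>T. openin (XT_topology L) T \<and> y \<in> T
        \<and> T \<subseteq> XT_to_path L -` U \<inter> topspace (XT_topology L)"
      using openin_XT_topology_diagonal_agree[OF y(1)] y(1) by blast
  qed
qed

lemma homeomorphic_map_path_to_XT:
  "homeomorphic_map (inf_path_topology L) (XT_topology L) path_to_XT"
  unfolding homeomorphic_map_maps homeomorphic_maps_def
  using continuous_map_path_to_XT continuous_map_XT_to_path XT_to_path_path_to_XT
    path_to_XT_XT_to_path
  unfolding topspace_inf_path_topology topspace_XT_topology by blast

end

theorem lemma4p9:
  fixes L :: "'a kgraph"
  assumes "is_2graph L"
    and "finite (Lpow L e1 \<union> Lpow L e2)"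
  shows "homeomorphic_map (inf_path_topology L) (XT_topology L) (\<lambda>x n. x n (n + (1, 1)))
         \<and> (\<forall>p. \<forall>x\<in>inf_paths L.
               (\<lambda>n. path_shift p x n (n + (1, 1))) = XT_shift p (\<lambda>n. x n (n + (1, 1))))"
proof
  interpret two_graph L
    by (rule two_graph.intro) (rule assms(1))
  show "homeomorphic_map (inf_path_topology L) (XT_topology L) (\<lambda>x n. x n (n + (1, 1)))"
    using homeomorphic_map_path_to_XT unfolding path_to_XT_def[abs_def] .
  show "\<forall>p. \<forall>x\<in>inf_paths L.
      (\<lambda>n. path_shift p x n (n + (1, 1))) = XT_shift p (\<lambda>n. x n (n + (1, 1)))"
    using path_to_XT_path_shift unfolding path_to_XT_def by blast
qed

end
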